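(* Let $G=(V,E)$ be an unweighted connected graph with $n$ vertices, and let $s,t\in V$ be distinct. Then $$ \frac{2}{n^{2}}\leq B_{st}^{2}. $$
   Context: $L=D-A$ is the Laplacian of the unweighted graph $G$, $L^{+}$ its Moore–Penrose pseudoinverse, $L^{2+}=(L^+)^2$, and $1_v$ the indicator vector of vertex $v$. The biharmonic distance is $B_{st}=\sqrt{(1_s-1_t)^{T}L^{2+}(1_s-1_t)}$. *)

theory Defs
  imports "HOL-Analysis.Analysis"
begin

text \<open>Vertices of the graph are the elements of a finite type 'n (so n = CARD('n)).
  An unweighted simple graph is a symmetric irreflexive adjacency relation.\<close>

definition simple_graph :: "('n::finite \<Rightarrow> 'n \<Rightarrow> bool) \<Rightarrow> bool" where
  "simple_graph E \<longleftrightarrow> (\<forall>u v. E u v \<longrightarrow> E v u) \<and> (\<forall>v. \<not> E v v)"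

definition connected_graph :: "('n::finite \<Rightarrow> 'n \<Rightarrow> bool) \<Rightarrow> bool" where
  "connected_graph E \<longleftrightarrow> (\<forall>u v. E\<^sup>*\<^sup>* u v)"

definition degree :: "('n::finite \<Rightarrow> 'n \<Rightarrow> bool) \<Rightarrow> 'n \<Rightarrow> real" where
  "degree E v = real (card {w. E v w})"

definition laplacian :: "('n::finite \<Rightarrow> 'n \<Rightarrow> bool) \<Rightarrow> real^'n^'n" where
  "laplacian E = (\<chi> i j. (if i = j then degree E i else 0) - (if E i j then 1 else 0))"

definition pinv :: "real^'n^'n \<Rightarrow> real^'n^'n" where
  "pinv A = (THE X. A ** X ** A = A \<and> X ** A ** X = X \<and>
                    transpose (A ** X) = A ** X \<and> transpose (X ** A) = X ** A)"

definition indicator_vec :: "'n::finite \<Rightarrow> real^'n" where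
  "indicator_vec v = (\<chi> i. if i = v then 1 else 0)"

definition biharmonic_dist :: "('n::finite \<Rightarrow> 'n \<Rightarrow> bool) \<Rightarrow> 'n \<Rightarrow> 'n \<Rightarrow> real" where
  "biharmonic_dist E s t =
     (let x = indicator_vec s - indicator_vec t;
          Lp = pinv (laplacian E)
      in sqrt (x \<bullet> ((Lp ** Lp) *v x)))"

end

theory Submission
  imports Defs
begin

(* Let x = 1_s - 1_t and y = L^+ x, so that B_st = |y| and, as x is orthogonal to the
   constants, L y = x. The Laplacian form u^T L v = 1/2 sum_{E i j} (u_i - u_j)(v_i - v_j)
   is positive semidefinite, so by Cauchy-Schwarz
     4 = (x^T L y)^2 <= (x^T L x) (y^T L y) = (x^T L x) R_st
   for the effective resistance R_st = x^T y. Since x^T L x = d_s + d_t + 2 A_st <= 2n, this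
   gives R_st >= 2/n, and the Euclidean Cauchy-Schwarz inequality R_st^2 <= |x|^2 |y|^2 = 2 B_st^2
   concludes. The pseudoinverse is exhibited as L^+ = (L + J)^-1 - J with J = 1 1^T / n;
   L + J is invertible because on a connected graph the kernel of L consists of the constants. *)

lemma matrix_diff_ldistrib: "(A::'a::ring_1^'n^'m) ** (B - C) = A ** B - A ** C"
  by (simp add: vec_eq_iff matrix_matrix_mult_def sum_subtractf right_diff_distrib)

lemma matrix_diff_rdistrib: "((B::'a::ring_1^'n^'m) - C) ** A = B ** A - C ** A"
  by (simp add: vec_eq_iff matrix_matrix_mult_def sum_subtractf left_diff_distrib)

lemma matrix_add_rdistrib: "((B::'a::semiring_1^'n^'m) + C) ** A = B ** A + C ** A"
  by (simp add: vec_eq_iff matrix_matrix_mult_def sum.distrib distrib_right)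

lemma transpose_diff: "transpose (A - B) = transpose A - transpose (B::'a::ab_group_add^'n^'m)"
  by (simp add: transpose_def vec_eq_iff)

lemma transpose_zero [simp]: "transpose 0 = (0::'a::zero^'n^'m)"
  by (simp add: transpose_def vec_eq_iff)

definition is_pinv :: "real^'n^'n \<Rightarrow> real^'n^'n \<Rightarrow> bool" where
  "is_pinv A X \<longleftrightarrow> A ** X ** A = A \<and> X ** A ** X = X \<and>
                   transpose (A ** X) = A ** X \<and> transpose (X ** A) = X ** A"

lemma is_pinv_unique:
  assumes X: "is_pinv A X" and Y: "is_pinv A Y"
  shows "X = Y"
proof -
  have X1: "A ** X ** A = A" and X2: "X ** A ** X = X" and X3: "transpose (A ** X) = A ** X"
    and X4: "transpose (X ** A) = X ** A" using X unfolding is_pinv_def by auto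
  have Y1: "A ** Y ** A = A" and Y2: "Y ** A ** Y = Y" and Y3: "transpose (A ** Y) = A ** Y"
    and Y4: "transpose (Y ** A) = Y ** A" using Y unfolding is_pinv_def by auto
  have "X = X ** (A ** X)" using X2 by (simp add: matrix_mul_assoc)
  also have "\<dots> = X ** transpose (A ** Y ** A ** X)"
    using X3 Y1 by (simp add: matrix_mul_assoc)
  also have "\<dots> = X ** A ** Y"
    using X3 Y3 X2 by (simp add: matrix_transpose_mul matrix_mul_assoc)
  finally have XAY: "X = X ** A ** Y" .
  have "Y = (Y ** A) ** Y" using Y2 by (simp add: matrix_mul_assoc)
  also have "\<dots> = transpose (Y ** A ** X ** A) ** Y"
    using X1 Y4 by (metis matrix_mul_assoc)
  also have "\<dots> = X ** A ** Y"
    using X4 Y4 Y2 by (metis matrix_mul_assoc matrix_transpose_mul)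
  finally show ?thesis using XAY by simp
qed

lemma pinv_eqI: "is_pinv A X \<Longrightarrow> pinv A = X"
  unfolding pinv_def by (rule the_equality) (use is_pinv_unique in \<open>auto simp: is_pinv_def\<close>)

lemma is_pinv_symmetric:
  assumes "is_pinv A X" and "transpose A = A"
  shows "transpose X = X"
proof -
  have "is_pinv A (transpose X)"
    using assms unfolding is_pinv_def
    by (metis matrix_transpose_mul matrix_mul_assoc transpose_transpose)
  then show ?thesis using is_pinv_unique assms(1) by blast
qed

lemma is_pinv_shifted_inverse:
  fixes A P B :: "real^'n^'n"
  assumes A: "transpose A = A" and P: "transpose P = P" "P ** P = P" and AP: "A ** P = 0"
    and B: "B ** (A + P) = mat 1"
  shows "is_pinv A (B - P)" and "A ** (B - P) = mat 1 - P"
proof -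
  have B': "(A + P) ** B = mat 1" using B matrix_left_right_inverse by blast
  have PA: "P ** A = 0"
    using arg_cong[OF AP, of transpose] by (simp add: matrix_transpose_mul A P)
  have BP: "B ** P = P"
  proof -
    have "(A + P) ** P = P" by (simp add: matrix_add_rdistrib AP P)
    then show ?thesis by (metis B matrix_mul_assoc matrix_mul_lid)
  qed
  have PB: "P ** B = P"
  proof -
    have "P ** (A + P) = P" by (simp add: matrix_add_ldistrib PA P)
    then show ?thesis by (metis B' matrix_mul_assoc matrix_mul_rid)
  qed
  have "A ** (B - P) = (A + P) ** B - P ** B"
    by (simp add: matrix_diff_ldistrib matrix_add_rdistrib AP)
  then have AX: "A ** (B - P) = mat 1 - P" by (simp add: B' PB)
  have "(B - P) ** A = B ** (A + P) - B ** P"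
    by (simp add: matrix_diff_rdistrib matrix_add_ldistrib PA)
  then have XA: "(B - P) ** A = mat 1 - P" by (simp add: B BP)
  have sym: "transpose (mat 1 - P) = mat 1 - P" by (simp add: transpose_diff P)
  show "A ** (B - P) = mat 1 - P" by (fact AX)
  show "is_pinv A (B - P)"
    unfolding is_pinv_def AX XA sym
    by (simp add: matrix_diff_ldistrib matrix_diff_rdistrib PA PB P)
qed

lemma laplacian_mult_vec:
  "(laplacian E *v v) $ i = (\<Sum>j\<in>UNIV. if E i j then v$i - v$j else 0)"
proof -
  have "(laplacian E *v v) $ i = degree E i * v$i - (\<Sum>j\<in>UNIV. if E i j then v$j else 0)"
    by (simp add: laplacian_def matrix_vector_mult_def left_diff_distrib sum_subtractf
        if_distrib[of "\<lambda>x. x * _"] cong: if_cong)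
  also have "degree E i * v$i = (\<Sum>j\<in>UNIV. if E i j then v$i else 0)"
    by (simp add: degree_def sum.If_cases)
  finally show ?thesis by (simp add: sum_subtractf[symmetric] if_distrib cong: if_cong)
qed

lemma laplacian_form:
  assumes "simple_graph E"
  shows "u \<bullet> (laplacian E *v v) =
    (\<Sum>(i, j)\<in>UNIV. if E i j then (u$i - u$j) * (v$i - v$j) else 0) / 2"
proof -
  have sym: "E i j = E j i" for i j using assms unfolding simple_graph_def by blast
  define S where "S = (\<Sum>i\<in>UNIV. \<Sum>j\<in>UNIV. if E i j then u$i * (v$i - v$j) else 0)"
  have form: "u \<bullet> (laplacian E *v v) = S"
    unfolding S_def inner_vec_def laplacian_mult_vec
    by (simp add: sum_distrib_left if_distrib cong: if_cong)
  have "S = (\<Sum>j\<in>UNIV. \<Sum>i\<in>UNIV. if E i j then u$i * (v$i - v$j) else 0)"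
    unfolding S_def by (rule sum.swap)
  also have "\<dots> = (\<Sum>i\<in>UNIV. \<Sum>j\<in>UNIV. if E i j then - (u$j * (v$i - v$j)) else 0)"
    using sym by (intro sum.cong refl) (auto simp: algebra_simps)
  finally have swapped: "S = \<dots>" .
  have "2 * S = (\<Sum>i\<in>UNIV. \<Sum>j\<in>UNIV. if E i j then u$i * (v$i - v$j) else 0)
                + (\<Sum>i\<in>UNIV. \<Sum>j\<in>UNIV. if E i j then - (u$j * (v$i - v$j)) else 0)"
    unfolding mult_2 using S_def swapped by (rule arg_cong2)
  also have "\<dots> = (\<Sum>i\<in>UNIV. \<Sum>j\<in>UNIV. if E i j then (u$i - u$j) * (v$i - v$j) else 0)"
    by (simp add: sum.distrib[symmetric]) (intro sum.cong refl; auto simp: algebra_simps)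
  also have "\<dots> = (\<Sum>(i, j)\<in>UNIV. if E i j then (u$i - u$j) * (v$i - v$j) else 0)"
    by (simp add: sum.cartesian_product UNIV_Times_UNIV[symmetric] del: UNIV_Times_UNIV)
  finally show ?thesis using form by simp
qed

lemma laplacian_symmetric: "simple_graph E \<Longrightarrow> transpose (laplacian E) = laplacian E"
  unfolding simple_graph_def laplacian_def transpose_def by (auto simp: vec_eq_iff)

lemma laplacian_form_nonneg: "simple_graph E \<Longrightarrow> 0 \<le> v \<bullet> (laplacian E *v v)"
  by (auto simp: laplacian_form intro!: sum_nonneg)

lemma laplacian_form_Cauchy_Schwarz:
  fixes E :: "'n::finite \<Rightarrow> 'n \<Rightarrow> bool"
  assumes "simple_graph E"
  shows "(u \<bullet> (laplacian E *v v))^2 \<le> (u \<bullet> (laplacian E *v u)) * (v \<bullet> (laplacian E *v v))"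
proof -
  define d where "d w = (\<lambda>(i, j). if E i j then w$i - w$j else (0::real))" for w :: "real^'n"
  have form: "w \<bullet> (laplacian E *v z) = (\<Sum>p\<in>UNIV. d w p * d z p) / 2" for w z
    unfolding laplacian_form[OF assms] d_def by (auto intro!: sum.cong)
  show ?thesis
    unfolding form using Cauchy_Schwarz_ineq_sum[of "d u" "d v" UNIV]
    by (simp add: power_divide power2_eq_square)
qed

lemma laplacian_form_eq_0_imp_const:
  assumes "simple_graph E" and "connected_graph E" and "v \<bullet> (laplacian E *v v) = 0"
  shows "v$i = v$j"
proof -
  have zero: "\<forall>p\<in>UNIV. (\<lambda>(a, b). if E a b then (v$a - v$b) * (v$a - v$b) else 0) p = 0"
    using assms(3) unfolding laplacian_form[OF assms(1)]
    by (subst sum_nonneg_eq_0_iff[symmetric]) auto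
  have edge: "E a b \<Longrightarrow> v$a = v$b" for a b
    using zero[rule_format, of "(a, b)"] by simp
  have "E\<^sup>*\<^sup>* i j" using assms(2) unfolding connected_graph_def by blast
  then show ?thesis by induct (auto dest: edge)
qed

lemma degree_le_card:
  fixes E :: "'n::finite \<Rightarrow> 'n \<Rightarrow> bool"
  assumes "simple_graph E"
  shows "degree E v \<le> real CARD('n) - 1"
proof -
  have "{w. E v w} \<subseteq> UNIV - {v}" using assms unfolding simple_graph_def by auto
  then have "card {w. E v w} \<le> CARD('n) - 1"
    using card_mono[of "UNIV - {v}"] by (simp add: card_Diff_singleton)
  then show ?thesis
    unfolding degree_def using zero_less_card_finite[where 'a='n] by linarith
qed

definition averaging_matrix :: "real^'n^'n" where
  "averaging_matrix = (\<chi> i j. 1 / real CARD('n))"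

lemma averaging_matrix_mult_vec:
  "(averaging_matrix *v (v::real^'n)) $ i = (\<Sum>j\<in>UNIV. v$j) / real CARD('n)"
  by (simp add: averaging_matrix_def matrix_vector_mult_def sum_divide_distrib)

lemma transpose_averaging_matrix: "transpose averaging_matrix = averaging_matrix"
  by (simp add: averaging_matrix_def transpose_def vec_eq_iff)

lemma averaging_matrix_idem: "averaging_matrix ** averaging_matrix = averaging_matrix"
  by (simp add: averaging_matrix_def matrix_matrix_mult_def vec_eq_iff power2_eq_square)

lemma laplacian_mult_averaging_matrix: "laplacian E ** averaging_matrix = 0"
proof -
  have "(\<Sum>k\<in>UNIV. laplacian E $ i $ k) = (laplacian E *v vec 1) $ i" for i
    by (simp add: matrix_vector_mult_def)
  also have "(laplacian E *v vec 1) $ i = 0" for i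
    by (simp add: laplacian_mult_vec cong: if_cong)
  finally show ?thesis
    by (simp add: vec_eq_iff matrix_matrix_mult_def averaging_matrix_def sum_divide_distrib[symmetric])
qed

lemma laplacian_plus_averaging_matrix_ker:
  fixes E :: "'n::finite \<Rightarrow> 'n \<Rightarrow> bool"
  assumes "simple_graph E" and "connected_graph E"
    and "(laplacian E + averaging_matrix) *v v = 0"
  shows "v = 0"
proof -
  let ?L = "laplacian E" and ?J = "averaging_matrix :: real^'n^'n"
  have "vec 1 \<bullet> (?L *v v) = 0"
    by (simp add: laplacian_form[OF assms(1)] cong: if_cong)
  moreover have "vec 1 \<bullet> (?J *v v) = (\<Sum>j\<in>UNIV. v$j)"
    by (simp add: inner_vec_def averaging_matrix_mult_vec)
  ultimately have sum_v: "(\<Sum>j\<in>UNIV. v$j) = 0"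
    using arg_cong[OF assms(3), of "\<lambda>w. vec 1 \<bullet> w"]
    by (simp add: matrix_vector_mult_add_rdistrib inner_add_right)
  then have "?J *v v = 0" by (simp add: vec_eq_iff averaging_matrix_mult_vec)
  then have "v \<bullet> (?L *v v) = 0"
    using assms(3) by (simp add: matrix_vector_mult_add_rdistrib)
  then have const: "v$j = v$i" for i j
    using laplacian_form_eq_0_imp_const[OF assms(1,2)] by blast
  have "(\<Sum>j\<in>UNIV. v$j) = (\<Sum>j\<in>(UNIV::'n set). v$i)" for i
    by (intro sum.cong refl const)
  then have "v$i = 0" for i using sum_v by simp
  then show ?thesis by (simp add: vec_eq_iff)
qed

lemma laplacian_pinv:
  fixes E :: "'n::finite \<Rightarrow> 'n \<Rightarrow> bool"
  assumes "simple_graph E" and "connected_graph E"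
  shows "is_pinv (laplacian E) (pinv (laplacian E))"
    and "laplacian E ** pinv (laplacian E) = mat 1 - averaging_matrix"
proof -
  obtain B where "B ** (laplacian E + averaging_matrix) = mat 1"
    using matrix_left_invertible_ker laplacian_plus_averaging_matrix_ker[OF assms] by blast
  note shifted = is_pinv_shifted_inverse[OF laplacian_symmetric[OF assms(1)]
      transpose_averaging_matrix averaging_matrix_idem laplacian_mult_averaging_matrix this]
  show "is_pinv (laplacian E) (pinv (laplacian E))"
    and "laplacian E ** pinv (laplacian E) = mat 1 - averaging_matrix"
    using shifted by (simp_all add: pinv_eqI)
qed

lemma laplacian_pinv_cancel:
  fixes E :: "'n::finite \<Rightarrow> 'n \<Rightarrow> bool"
  assumes "simple_graph E" and "connected_graph E" and "(\<Sum>i\<in>UNIV. x$i) = 0"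
  shows "laplacian E *v (pinv (laplacian E) *v x) = x"
proof -
  have "averaging_matrix *v x = 0"
    using assms(3) by (simp add: vec_eq_iff averaging_matrix_mult_vec)
  then show ?thesis
    by (simp add: matrix_vector_mul_assoc laplacian_pinv(2)[OF assms(1,2)]
        matrix_vector_mult_diff_rdistrib)
qed

lemma indicator_vec_eq_axis: "indicator_vec v = axis v 1"
  by (simp add: indicator_vec_def axis_def)

lemma inner_indicator_diff_self:
  "s \<noteq> t \<Longrightarrow> (indicator_vec s - indicator_vec t) \<bullet> (indicator_vec s - indicator_vec t) = 2"
  by (simp add: indicator_vec_eq_axis inner_diff_left inner_diff_right inner_axis_axis)

lemma inner_indicator_diff_mult_vec:
  fixes A :: "real^'n::finite^'n"
  shows "(indicator_vec s - indicator_vec t) \<bullet> (A *v (indicator_vec s - indicator_vec t))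
     = A$s$s - A$s$t - A$t$s + A$t$t"
proof -
  have "(A *v axis k 1) $ i = A $ i $ k" for i k
    by (simp add: matrix_vector_mult_def axis_def if_distrib[of "\<lambda>x. _ * x"] cong: if_cong)
  then show ?thesis
    by (simp add: indicator_vec_eq_axis inner_diff_left inner_diff_right inner_axis'
        matrix_vector_mult_diff_distrib)
qed

lemma laplacian_form_indicator_diff_le:
  fixes E :: "'n::finite \<Rightarrow> 'n \<Rightarrow> bool"
  assumes "simple_graph E" and "s \<noteq> t"
  shows "(indicator_vec s - indicator_vec t) \<bullet> (laplacian E *v (indicator_vec s - indicator_vec t))
           \<le> 2 * real CARD('n)"
proof -
  have "E t s = E s t" "\<not> E s s" "\<not> E t t"
    using assms(1) unfolding simple_graph_def by blast+
  then have "(indicator_vec s - indicator_vec t) \<bullet> (laplacian E *v (indicator_vec s - indicator_vec t))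
      = degree E s + degree E t + (if E s t then 2 else 0)"
    using assms(2) by (simp add: inner_indicator_diff_mult_vec laplacian_def)
  then show ?thesis
    using degree_le_card[OF assms(1), of s] degree_le_card[OF assms(1), of t] by auto
qed

lemma biharmonic_dist_eq_norm:
  fixes E :: "'n::finite \<Rightarrow> 'n \<Rightarrow> bool"
  assumes "simple_graph E" and "connected_graph E"
  shows "biharmonic_dist E s t = norm (pinv (laplacian E) *v (indicator_vec s - indicator_vec t))"
proof -
  let ?P = "pinv (laplacian E)" and ?x = "indicator_vec s - indicator_vec t"
  have "transpose ?P = ?P"
    using is_pinv_symmetric laplacian_pinv(1) laplacian_symmetric assms by blast
  then have "?x \<bullet> ((?P ** ?P) *v ?x) = (?P *v ?x) \<bullet> (?P *v ?x)"
    by (metis dot_lmul_matrix matrix_vector_mul_assoc transpose_matrix_vector)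
  then show ?thesis by (simp add: biharmonic_dist_def Let_def norm_eq_sqrt_inner)
qed

definition effective_resistance :: "('n::finite \<Rightarrow> 'n \<Rightarrow> bool) \<Rightarrow> 'n \<Rightarrow> 'n \<Rightarrow> real" where
  "effective_resistance E s t =
     (let x = indicator_vec s - indicator_vec t in x \<bullet> (pinv (laplacian E) *v x))"

lemma effective_resistance_ge:
  fixes E :: "'n::finite \<Rightarrow> 'n \<Rightarrow> bool"
  assumes "simple_graph E" and "connected_graph E" and "s \<noteq> t"
  shows "2 / real CARD('n) \<le> effective_resistance E s t"
proof -
  let ?L = "laplacian E"
  define x where "x = indicator_vec s - indicator_vec t"
  define y where "y = pinv ?L *v x"
  have "(\<Sum>i\<in>UNIV. x$i) = 0"
    by (simp add: x_def indicator_vec_def sum_subtractf)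
  then have Ly: "?L *v y = x"
    unfolding y_def using laplacian_pinv_cancel assms(1,2) by blast
  have "x \<bullet> x = 2" unfolding x_def using assms(3) by (rule inner_indicator_diff_self)
  then have "4 = (x \<bullet> (?L *v y))^2" by (simp add: Ly)
  also have "\<dots> \<le> (x \<bullet> (?L *v x)) * (y \<bullet> (?L *v y))"
    by (rule laplacian_form_Cauchy_Schwarz[OF assms(1)])
  also have "\<dots> \<le> 2 * real CARD('n) * (x \<bullet> y)"
    using laplacian_form_indicator_diff_le[OF assms(1,3)] laplacian_form_nonneg[OF assms(1), of y]
    unfolding x_def Ly by (simp add: inner_commute mult_right_mono)
  finally show ?thesis
    by (simp add: effective_resistance_def x_def[symmetric] y_def[symmetric] field_simps)
qed

lemma effective_resistance_sq_le:
  fixes E :: "'n::finite \<Rightarrow> 'n \<Rightarrow> bool"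
  assumes "simple_graph E" and "connected_graph E" and "s \<noteq> t"
  shows "(effective_resistance E s t)^2 \<le> 2 * (biharmonic_dist E s t)^2"
proof -
  define x where "x = indicator_vec s - indicator_vec t"
  define y where "y = pinv (laplacian E) *v x"
  have "x \<bullet> x = 2" unfolding x_def using assms(3) by (rule inner_indicator_diff_self)
  then show ?thesis
    using Cauchy_Schwarz_ineq[of x y]
    by (simp add: effective_resistance_def biharmonic_dist_eq_norm[OF assms(1,2)]
        power2_norm_eq_inner x_def[symmetric] y_def[symmetric])
qed

theorem theoremA1:
  fixes E :: "'n::finite \<Rightarrow> 'n \<Rightarrow> bool" and s t :: 'n
  assumes "simple_graph E" and "connected_graph E" and "s \<noteq> t"
  shows "2 / (real CARD('n))^2 \<le> (biharmonic_dist E s t)^2"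
proof -
  have "2 / real CARD('n) \<le> effective_resistance E s t"
    by (rule effective_resistance_ge[OF assms])
  then have "(2 / real CARD('n))^2 \<le> (effective_resistance E s t)^2"
    by (rule power_mono) simp
  also have "\<dots> \<le> 2 * (biharmonic_dist E s t)^2"
    by (rule effective_resistance_sq_le[OF assms])
  finally show ?thesis by (simp add: power_divide)
qed

end
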